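(* Let $F$ be a finite field of characteristic $3$. Let $k\ge 0$ be an integer, $m=3k+1$, and $t$ an integer with $t^3\equiv 1\pmod m$ and $\gcd(m,t-1)=1$. Let $G=T_{3m}=\langle x,y\mid x^m=y^3=1,\ y^{-1}xy=x^t\rangle$ (of order $3m$) and $FG$ its group algebra. Let $s\in FG$ be the sum of all elements of $G$ whose order is a power of $3$ (including the identity), and let $\mathrm{Anh}(s)=\{\alpha\in FG\mid \alpha s=s\alpha=0\}$. Then $\mathrm{Anh}(s)\subseteq J(FG)$.
   Context: $J(FG)$ denotes the Jacobson radical of $FG$. *)

theory Defs
  imports "HOL-Algebra.Algebra" "HOL-Number_Theory.Cong"
begin

text \<open>The metacyclic group T_{3m} = < x, y | x^m = y^3 = 1, y^-1 x y = x^t >,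
  realised concretely: the pair (a,b) with 0 \<le> a < m, 0 \<le> b < 3 stands for x^a y^b.
  Since y^b x^c = x^(c t^(2b)) y^b (using t^3 = 1 mod m), the product is
  (x^a y^b)(x^c y^d) = x^(a + c t^(2b)) y^(b+d).\<close>
definition T_mult :: "nat \<Rightarrow> int \<Rightarrow> nat \<times> nat \<Rightarrow> nat \<times> nat \<Rightarrow> nat \<times> nat" where
  "T_mult m t p q = (nat ((int (fst p) + int (fst q) * t ^ (2 * snd p)) mod int m),
                     (snd p + snd q) mod 3)"

definition T_group :: "nat \<Rightarrow> int \<Rightarrow> (nat \<times> nat) monoid" where
  "T_group m t = \<lparr> carrier = {0..<m} \<times> {0..<3}, monoid.mult = T_mult m t, monoid.one = (0, 0) \<rparr>"

definition group_algebra :: "('g, 'm) monoid_scheme \<Rightarrow> ('g \<Rightarrow> 'a::field) ring" where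
  "group_algebra G = \<lparr> carrier = {f. \<forall>g. g \<notin> carrier G \<longrightarrow> f g = 0},
     monoid.mult = (\<lambda>\<alpha> \<beta> g. if g \<in> carrier G then
                  (\<Sum>(h, k) \<in> {(h, k). h \<in> carrier G \<and> k \<in> carrier G \<and> h \<otimes>\<^bsub>G\<^esub> k = g}. \<alpha> h * \<beta> k)
                else 0),
     monoid.one = (\<lambda>g. if g = \<one>\<^bsub>G\<^esub> then 1 else 0),
     ring.zero = (\<lambda>g. 0),
     ring.add = (\<lambda>\<alpha> \<beta> g. \<alpha> g + \<beta> g) \<rparr>"

definition left_ideal :: "'a set \<Rightarrow> ('a, 'b) ring_scheme \<Rightarrow> bool" where
  "left_ideal I R \<longleftrightarrow> additive_subgroup I R \<and>
     (\<forall>r \<in> carrier R. \<forall>a \<in> I. r \<otimes>\<^bsub>R\<^esub> a \<in> I)"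

definition maximal_left_ideal :: "'a set \<Rightarrow> ('a, 'b) ring_scheme \<Rightarrow> bool" where
  "maximal_left_ideal I R \<longleftrightarrow> left_ideal I R \<and> I \<noteq> carrier R \<and>
     (\<forall>J. left_ideal J R \<and> I \<subseteq> J \<and> J \<noteq> carrier R \<longrightarrow> J = I)"

definition jacobson_radical :: "('a, 'b) ring_scheme \<Rightarrow> 'a set" where
  "jacobson_radical R = carrier R \<inter> \<Inter> {I. maximal_left_ideal I R}"

end

theory Submission
  imports Defs
begin

(* An element of T_{3m} has 3-power order iff it lies outside the normal subgroup <x> of
   order m or is the identity, so s = 1 + (sum of the two nontrivial cosets of <x>).
   If alpha s = 0, comparing coefficients shows that alpha is constant on the cosets of <x>,
   with values l_0, l_1, l_2 summing to 0. Such elements multiply like l_0 + l_1 y + l_2 y^2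
   in F C_3 (the factor |<x>| = m is 1 in F), where cubing is the Frobenius map, so
   alpha^3 = (l_0 + l_1 + l_2)^3 = 0. Hence the left annihilator of s is a nil left ideal,
   and a nil left ideal lies in every maximal left ideal M: otherwise 1 = u + r a with u in M,
   and u = 1 - r a is left invertible since r a is nilpotent, forcing 1 in M. *)

section \<open>The group algebra of a finite group\<close>

lemma group_algebra_carrier_iff:
  "\<alpha> \<in> carrier (group_algebra G) \<longleftrightarrow> (\<forall>g. g \<notin> carrier G \<longrightarrow> \<alpha> g = 0)"
  by (simp add: group_algebra_def)

lemma group_algebra_mult_outside:
  "g \<notin> carrier G \<Longrightarrow> (\<alpha> \<otimes>\<^bsub>group_algebra G\<^esub> \<beta>) g = 0"
  by (simp add: group_algebra_def)

lemma group_algebra_add: "\<alpha> \<oplus>\<^bsub>group_algebra G\<^esub> \<beta> = (\<lambda>g. \<alpha> g + \<beta> g)"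
  by (simp add: group_algebra_def)

lemma group_algebra_zero: "\<zero>\<^bsub>group_algebra G\<^esub> = (\<lambda>g. 0)"
  by (simp add: group_algebra_def)

lemma group_algebra_one: "\<one>\<^bsub>group_algebra G\<^esub> = (\<lambda>g. if g = \<one>\<^bsub>G\<^esub> then 1 else 0)"
  by (simp add: group_algebra_def)

context group
begin

lemma sum_left_translate:
  "k \<in> carrier G \<Longrightarrow> (\<Sum>h\<in>carrier G. f h) = (\<Sum>j\<in>carrier G. f (k \<otimes> j))"
  using sum.reindex[OF inj_on_cmult, of k f] by (simp add: surj_const_mult)

lemma group_algebra_mult_apply:
  assumes "g \<in> carrier G"
  shows "(\<alpha> \<otimes>\<^bsub>group_algebra G\<^esub> \<beta>) g = (\<Sum>h\<in>carrier G. \<alpha> h * \<beta> (inv h \<otimes> g))"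
proof -
  have "{(h, k). h \<in> carrier G \<and> k \<in> carrier G \<and> h \<otimes> k = g} = (\<lambda>h. (h, inv h \<otimes> g)) ` carrier G"
    using assms by (auto simp: inv_solve_left m_assoc[symmetric])
  then have "(\<alpha> \<otimes>\<^bsub>group_algebra G\<^esub> \<beta>) g = (\<Sum>(h, k) \<in> (\<lambda>h. (h, inv h \<otimes> g)) ` carrier G. \<alpha> h * \<beta> k)"
    using assms by (simp add: group_algebra_def)
  also have "\<dots> = (\<Sum>h\<in>carrier G. \<alpha> h * \<beta> (inv h \<otimes> g))"
    by (subst sum.reindex) (auto simp: inj_on_def)
  finally show ?thesis .
qed

lemma group_algebra_mult_assoc:
  "(\<alpha> \<otimes>\<^bsub>group_algebra G\<^esub> \<beta>) \<otimes>\<^bsub>group_algebra G\<^esub> \<gamma>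
     = \<alpha> \<otimes>\<^bsub>group_algebra G\<^esub> (\<beta> \<otimes>\<^bsub>group_algebra G\<^esub> (\<gamma> :: 'a \<Rightarrow> 'c::field))"
proof
  fix g
  show "((\<alpha> \<otimes>\<^bsub>group_algebra G\<^esub> \<beta>) \<otimes>\<^bsub>group_algebra G\<^esub> \<gamma>) g
      = (\<alpha> \<otimes>\<^bsub>group_algebra G\<^esub> (\<beta> \<otimes>\<^bsub>group_algebra G\<^esub> \<gamma>)) g"
  proof (cases "g \<in> carrier G")
    case g: True
    have inner: "(\<Sum>h\<in>carrier G. \<beta> (inv k \<otimes> h) * \<gamma> (inv h \<otimes> g))
        = (\<beta> \<otimes>\<^bsub>group_algebra G\<^esub> \<gamma>) (inv k \<otimes> g)" if k: "k \<in> carrier G" for k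
    proof -
      have "(\<Sum>h\<in>carrier G. \<beta> (inv k \<otimes> h) * \<gamma> (inv h \<otimes> g))
          = (\<Sum>j\<in>carrier G. \<beta> j * \<gamma> (inv j \<otimes> (inv k \<otimes> g)))"
        using k g by (subst sum_left_translate[OF k])
          (simp add: m_assoc[symmetric] inv_mult_group)
      then show ?thesis
        using k g by (simp add: group_algebra_mult_apply)
    qed
    have "((\<alpha> \<otimes>\<^bsub>group_algebra G\<^esub> \<beta>) \<otimes>\<^bsub>group_algebra G\<^esub> \<gamma>) g
        = (\<Sum>h\<in>carrier G. \<Sum>k\<in>carrier G. \<alpha> k * \<beta> (inv k \<otimes> h) * \<gamma> (inv h \<otimes> g))"
      using g by (simp add: group_algebra_mult_apply sum_distrib_right)
    also have "\<dots> = (\<Sum>k\<in>carrier G. \<alpha> k * (\<Sum>h\<in>carrier G. \<beta> (inv k \<otimes> h) * \<gamma> (inv h \<otimes> g)))"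
      by (subst sum.swap) (simp add: sum_distrib_left mult.assoc)
    also have "\<dots> = (\<alpha> \<otimes>\<^bsub>group_algebra G\<^esub> (\<beta> \<otimes>\<^bsub>group_algebra G\<^esub> \<gamma>)) g"
      using g by (simp add: inner group_algebra_mult_apply)
    finally show ?thesis .
  qed (simp add: group_algebra_mult_outside)
qed

lemma group_algebra_l_one:
  assumes "finite (carrier G)" and "\<alpha> \<in> carrier (group_algebra G)"
  shows "\<one>\<^bsub>group_algebra G\<^esub> \<otimes>\<^bsub>group_algebra G\<^esub> \<alpha> = (\<alpha> :: 'a \<Rightarrow> 'c::field)"
proof
  fix g
  show "(\<one>\<^bsub>group_algebra G\<^esub> \<otimes>\<^bsub>group_algebra G\<^esub> \<alpha>) g = \<alpha> g"
  proof (cases "g \<in> carrier G")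
    case True
    then have "(\<one>\<^bsub>group_algebra G\<^esub> \<otimes>\<^bsub>group_algebra G\<^esub> \<alpha>) g
        = (\<Sum>h\<in>carrier G. if h = \<one> then \<alpha> g else 0)"
      by (auto simp: group_algebra_mult_apply group_algebra_one intro!: sum.cong)
    with True assms(1) show ?thesis
      by simp
  qed (use assms(2) in \<open>simp add: group_algebra_mult_outside group_algebra_carrier_iff\<close>)
qed

lemma group_algebra_r_one:
  assumes "finite (carrier G)" and "\<alpha> \<in> carrier (group_algebra G)"
  shows "\<alpha> \<otimes>\<^bsub>group_algebra G\<^esub> \<one>\<^bsub>group_algebra G\<^esub> = (\<alpha> :: 'a \<Rightarrow> 'c::field)"
proof
  fix g
  show "(\<alpha> \<otimes>\<^bsub>group_algebra G\<^esub> \<one>\<^bsub>group_algebra G\<^esub>) g = \<alpha> g"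
  proof (cases "g \<in> carrier G")
    case True
    then have "(\<alpha> \<otimes>\<^bsub>group_algebra G\<^esub> \<one>\<^bsub>group_algebra G\<^esub>) g
        = (\<Sum>h\<in>carrier G. if h = g then \<alpha> h else 0)"
      by (auto simp: group_algebra_mult_apply group_algebra_one inv_solve_left' intro!: sum.cong)
    with True assms(1) show ?thesis
      by simp
  qed (use assms(2) in \<open>simp add: group_algebra_mult_outside group_algebra_carrier_iff\<close>)
qed

lemma group_algebra_l_distr:
  "(\<alpha> \<oplus>\<^bsub>group_algebra G\<^esub> \<beta>) \<otimes>\<^bsub>group_algebra G\<^esub> \<gamma>
     = \<alpha> \<otimes>\<^bsub>group_algebra G\<^esub> \<gamma> \<oplus>\<^bsub>group_algebra G\<^esub> \<beta> \<otimes>\<^bsub>group_algebra G\<^esub> (\<gamma> :: 'a \<Rightarrow> 'c::field)"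
proof
  fix g
  show "((\<alpha> \<oplus>\<^bsub>group_algebra G\<^esub> \<beta>) \<otimes>\<^bsub>group_algebra G\<^esub> \<gamma>) g
      = (\<alpha> \<otimes>\<^bsub>group_algebra G\<^esub> \<gamma> \<oplus>\<^bsub>group_algebra G\<^esub> \<beta> \<otimes>\<^bsub>group_algebra G\<^esub> \<gamma>) g"
    by (cases "g \<in> carrier G")
      (simp_all add: group_algebra_add group_algebra_mult_apply group_algebra_mult_outside
        distrib_right sum.distrib)
qed

lemma group_algebra_r_distr:
  "\<gamma> \<otimes>\<^bsub>group_algebra G\<^esub> (\<alpha> \<oplus>\<^bsub>group_algebra G\<^esub> \<beta>)
     = \<gamma> \<otimes>\<^bsub>group_algebra G\<^esub> \<alpha> \<oplus>\<^bsub>group_algebra G\<^esub> \<gamma> \<otimes>\<^bsub>group_algebra G\<^esub> (\<beta> :: 'a \<Rightarrow> 'c::field)"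
proof
  fix g
  show "(\<gamma> \<otimes>\<^bsub>group_algebra G\<^esub> (\<alpha> \<oplus>\<^bsub>group_algebra G\<^esub> \<beta>)) g
      = (\<gamma> \<otimes>\<^bsub>group_algebra G\<^esub> \<alpha> \<oplus>\<^bsub>group_algebra G\<^esub> \<gamma> \<otimes>\<^bsub>group_algebra G\<^esub> \<beta>) g"
    by (cases "g \<in> carrier G")
      (simp_all add: group_algebra_add group_algebra_mult_apply group_algebra_mult_outside
        distrib_left sum.distrib)
qed

lemma ring_group_algebra:
  assumes "finite (carrier G)"
  shows "ring (group_algebra G :: ('a \<Rightarrow> 'c::field) ring)"
proof (rule ringI)
  show "abelian_group (group_algebra G :: ('a \<Rightarrow> 'c) ring)"
  proof (rule abelian_groupI)
    fix \<alpha> :: "'a \<Rightarrow> 'c" assume "\<alpha> \<in> carrier (group_algebra G)"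
    then show "\<exists>\<beta>\<in>carrier (group_algebra G). \<beta> \<oplus>\<^bsub>group_algebra G\<^esub> \<alpha> = \<zero>\<^bsub>group_algebra G\<^esub>"
      by (intro bexI[of _ "\<lambda>g. - \<alpha> g"])
        (auto simp: group_algebra_carrier_iff group_algebra_add group_algebra_zero)
  qed (auto simp: group_algebra_carrier_iff group_algebra_add group_algebra_zero algebra_simps)
  show "monoid (group_algebra G :: ('a \<Rightarrow> 'c) ring)"
  proof (rule monoidI)
    show "\<one>\<^bsub>group_algebra G\<^esub> \<in> carrier (group_algebra G :: ('a \<Rightarrow> 'c) ring)"
      by (simp add: group_algebra_carrier_iff group_algebra_one)
  qed (use assms in \<open>auto simp: group_algebra_carrier_iff group_algebra_mult_outside
      group_algebra_mult_assoc group_algebra_l_one group_algebra_r_one\<close>)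
qed (simp_all add: group_algebra_l_distr group_algebra_r_distr)

end

section \<open>Nil left ideals lie in the Jacobson radical\<close>

context ring
begin

lemma left_idealI:
  assumes "I \<subseteq> carrier R" and "\<zero> \<in> I"
    and "\<And>a b. a \<in> I \<Longrightarrow> b \<in> I \<Longrightarrow> a \<oplus> b \<in> I"
    and "\<And>r a. r \<in> carrier R \<Longrightarrow> a \<in> I \<Longrightarrow> r \<otimes> a \<in> I"
  shows "left_ideal I R"
proof -
  have "\<ominus> a \<in> I" if "a \<in> I" for a
    using assms(1) assms(4)[of "\<ominus> \<one>" a] that by (auto simp: l_minus)
  then show ?thesis
    using assms unfolding left_ideal_def
    by (intro conjI additive_subgroupI add.subgroupI) auto
qed

lemma left_ideal_left_annihilator:
  assumes "s \<in> carrier R"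
  shows "left_ideal {a \<in> carrier R. a \<otimes> s = \<zero>} R"
  using assms by (intro left_idealI) (auto simp: l_distr m_assoc)

lemma left_ideal_subset: "left_ideal I R \<Longrightarrow> I \<subseteq> carrier R"
  by (auto simp: left_ideal_def dest: additive_subgroup.a_subset)

lemma left_ideal_zero_closed: "left_ideal I R \<Longrightarrow> \<zero> \<in> I"
  by (simp add: left_ideal_def additive_subgroup.zero_closed)

lemma left_ideal_add_closed: "left_ideal I R \<Longrightarrow> a \<in> I \<Longrightarrow> b \<in> I \<Longrightarrow> a \<oplus> b \<in> I"
  by (simp add: left_ideal_def additive_subgroup.a_closed)

lemma left_ideal_mult_closed: "left_ideal I R \<Longrightarrow> r \<in> carrier R \<Longrightarrow> a \<in> I \<Longrightarrow> r \<otimes> a \<in> I"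
  by (simp add: left_ideal_def)

lemma left_ideal_eq_carrier_if_one_mem:
  assumes "left_ideal I R" and "\<one> \<in> I"
  shows "I = carrier R"
  using left_ideal_subset[OF assms(1)] left_ideal_mult_closed[OF assms(1) _ assms(2)]
  by (metis r_one subsetI subset_antisym)

lemma left_ideal_add_cyclic:
  assumes M: "left_ideal M R" and a: "a \<in> carrier R"
  shows "left_ideal {u \<oplus> r \<otimes> a |u r. u \<in> M \<and> r \<in> carrier R} R" (is "left_ideal ?L R")
proof (rule left_idealI)
  show "?L \<subseteq> carrier R"
    using left_ideal_subset[OF M] a by auto
  have "\<zero> = \<zero> \<oplus> \<zero> \<otimes> a"
    using a by simp
  then show "\<zero> \<in> ?L"
    using left_ideal_zero_closed[OF M] by blast
next
  fix x y assume "x \<in> ?L" "y \<in> ?L"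
  then obtain u r u' r' where "u \<in> M" "r \<in> carrier R" "x = u \<oplus> r \<otimes> a"
    and "u' \<in> M" "r' \<in> carrier R" "y = u' \<oplus> r' \<otimes> a"
    by blast
  moreover have "x \<oplus> y = (u \<oplus> u') \<oplus> (r \<oplus> r') \<otimes> a"
    using calculation left_ideal_subset[OF M] a by (simp add: l_distr subsetD a_ac)
  ultimately show "x \<oplus> y \<in> ?L"
    using left_ideal_add_closed[OF M] by blast
next
  fix r' x assume r': "r' \<in> carrier R" and "x \<in> ?L"
  then obtain u r where "u \<in> M" "r \<in> carrier R" "x = u \<oplus> r \<otimes> a"
    by blast
  moreover have "r' \<otimes> x = r' \<otimes> u \<oplus> (r' \<otimes> r) \<otimes> a"
    using calculation left_ideal_subset[OF M] a r' by (simp add: r_distr m_assoc subsetD)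
  ultimately show "r' \<otimes> x \<in> ?L"
    using left_ideal_mult_closed[OF M] r' by blast
qed

lemma maximal_left_ideal_not_memE:
  assumes M: "maximal_left_ideal M R" and a: "a \<in> carrier R" "a \<notin> M"
  obtains u r where "u \<in> M" "r \<in> carrier R" "\<one> = u \<oplus> r \<otimes> a"
proof -
  let ?L = "{u \<oplus> r \<otimes> a |u r. u \<in> M \<and> r \<in> carrier R}"
  have M_ideal: "left_ideal M R"
    using M by (simp add: maximal_left_ideal_def)
  have "M \<subseteq> ?L"
  proof
    fix u assume "u \<in> M"
    moreover have "u = u \<oplus> \<zero> \<otimes> a"
      using calculation left_ideal_subset[OF M_ideal] a by (simp add: subsetD)
    ultimately show "u \<in> ?L"
      using zero_closed by blast
  qed
  moreover have "a = \<zero> \<oplus> \<one> \<otimes> a"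
    using a by simp
  then have "a \<in> ?L"
    using left_ideal_zero_closed[OF M_ideal] one_closed by blast
  ultimately have "?L = carrier R"
    using M a(2) left_ideal_add_cyclic[OF M_ideal a(1)] unfolding maximal_left_ideal_def by blast
  then show ?thesis
    using that one_closed by blast
qed

lemma left_ideal_subset_jacobson_radical:
  assumes I: "left_ideal I R"
    and quasi_regular: "\<And>b. b \<in> I \<Longrightarrow> \<exists>v\<in>carrier R. v \<otimes> (\<one> \<ominus> b) = \<one>"
  shows "I \<subseteq> jacobson_radical R"
proof
  fix a assume "a \<in> I"
  then have a: "a \<in> carrier R"
    using left_ideal_subset[OF I] by blast
  have "a \<in> M" if M: "maximal_left_ideal M R" for M
  proof (rule ccontr)
    assume "a \<notin> M"
    then obtain u r where u: "u \<in> M" and r: "r \<in> carrier R" and one: "\<one> = u \<oplus> r \<otimes> a"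
      using maximal_left_ideal_not_memE[OF M a] by blast
    have M_ideal: "left_ideal M R" and "M \<noteq> carrier R"
      using M by (auto simp: maximal_left_ideal_def)
    have "u \<in> carrier R"
      using left_ideal_subset[OF M_ideal] u by blast
    obtain v where v: "v \<in> carrier R" and "v \<otimes> (\<one> \<ominus> r \<otimes> a) = \<one>"
      using quasi_regular[OF left_ideal_mult_closed[OF I r \<open>a \<in> I\<close>]] by blast
    moreover have "\<one> \<ominus> r \<otimes> a = u"
      using one \<open>u \<in> carrier R\<close> r a by (simp add: a_minus_def a_assoc r_neg)
    ultimately have "\<one> = v \<otimes> u"
      by simp
    then have "\<one> \<in> M"
      using left_ideal_mult_closed[OF M_ideal v u] by simp
    then show False
      using left_ideal_eq_carrier_if_one_mem[OF M_ideal] \<open>M \<noteq> carrier R\<close> by blast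
  qed
  then show "a \<in> jacobson_radical R"
    using a by (simp add: jacobson_radical_def)
qed

lemma one_minus_nilpotent_left_invertible:
  assumes b: "b \<in> carrier R" and nil: "b [^] (n::nat) = \<zero>"
  shows "\<exists>v\<in>carrier R. v \<otimes> (\<one> \<ominus> b) = \<one>"
proof -
  have "\<exists>v\<in>carrier R. v \<otimes> (\<one> \<ominus> b) = \<one> \<ominus> b [^] k" for k :: nat
  proof (induction k)
    case 0
    show ?case
      by (intro bexI[of _ \<zero>]) (auto simp: b a_minus_def r_neg)
  next
    case (Suc k)
    then obtain v where v: "v \<in> carrier R" "v \<otimes> (\<one> \<ominus> b) = \<one> \<ominus> b [^] k"
      by blast
    have "(v \<oplus> b [^] k) \<otimes> (\<one> \<ominus> b) = v \<otimes> (\<one> \<ominus> b) \<oplus> b [^] k \<otimes> (\<one> \<ominus> b)"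
      using v(1) b by (simp add: l_distr)
    also have "\<dots> = (\<one> \<ominus> b [^] k) \<oplus> (b [^] k \<ominus> b [^] Suc k)"
      using v b by (simp add: r_distr a_minus_def r_minus)
    also have "\<dots> = \<one> \<ominus> b [^] Suc k"
      using v b by (simp add: a_minus_def a_assoc r_neg1)
    finally have "(v \<oplus> b [^] k) \<otimes> (\<one> \<ominus> b) = \<one> \<ominus> b [^] Suc k" .
    moreover have "v \<oplus> b [^] k \<in> carrier R"
      using v b by simp
    ultimately show ?case
      by blast
  qed
  then show ?thesis
    using nil b by (metis a_minus_def r_zero minus_zero one_closed)
qed

lemma nil_left_ideal_subset_jacobson_radical:
  assumes I: "left_ideal I R" and nil: "\<And>b. b \<in> I \<Longrightarrow> \<exists>n::nat. b [^] n = \<zero>"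
  shows "I \<subseteq> jacobson_radical R"
proof (rule left_ideal_subset_jacobson_radical[OF I])
  fix b assume "b \<in> I"
  then have "b \<in> carrier R"
    using left_ideal_subset[OF I] by blast
  moreover obtain n :: nat where "b [^] n = \<zero>"
    using nil \<open>b \<in> I\<close> by blast
  ultimately show "\<exists>v\<in>carrier R. v \<otimes> (\<one> \<ominus> b) = \<one>"
    by (rule one_minus_nilpotent_left_invertible)
qed

end

section \<open>The group T_3m\<close>

lemma carrier_T_group: "carrier (T_group m t) = {0..<m} \<times> {0..<3}"
  by (simp add: T_group_def)

lemma T_group_mult: "x \<otimes>\<^bsub>T_group m t\<^esub> y = T_mult m t x y"
  by (simp add: T_group_def)

lemma one_T_group: "\<one>\<^bsub>T_group m t\<^esub> = (0, 0)"
  by (simp add: T_group_def)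

lemma cong_power_mod_exponent:
  fixes t :: "'a::unique_euclidean_semiring"
  assumes "[t ^ k = 1] (mod m)"
  shows "[t ^ (n mod k) = t ^ n] (mod m)"
proof -
  have "[(t ^ k) ^ (n div k) * t ^ (n mod k) = 1 ^ (n div k) * t ^ (n mod k)] (mod m)"
    by (intro cong_mult cong_pow assms cong_refl)
  then have "[t ^ n = t ^ (n mod k)] (mod m)"
    by (simp flip: power_mult power_add)
  then show ?thesis
    by (rule cong_sym)
qed

lemma group_T_group:
  assumes m: "0 < m" and t: "[t ^ 3 = 1] (mod int m)"
  shows "group (T_group m t)"
proof (rule groupI)
  fix x y z
  assume "x \<in> carrier (T_group m t)" "y \<in> carrier (T_group m t)" "z \<in> carrier (T_group m t)"
  then obtain a b c d e f where xyz: "x = (a, b)" "y = (c, d)" "z = (e, f)"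
    and "a < m" "c < m" "e < m" "b < 3" "d < 3" "f < 3"
    by (auto simp: carrier_T_group)
  have "[(t ^ 2) ^ 3 = 1] (mod int m)"
    using cong_pow[OF t, of 2] by (simp flip: power_mult add: mult.commute)
  from cong_power_mod_exponent[OF this, of "b + d"]
  have "[t ^ (2 * ((b + d) mod 3)) = t ^ (2 * b) * t ^ (2 * d)] (mod int m)"
    by (simp flip: power_mult add: distrib_left power_add)
  then have left: "[(int a + int c * t ^ (2 * b)) mod int m + int e * t ^ (2 * ((b + d) mod 3))
      = int a + int c * t ^ (2 * b) + int e * (t ^ (2 * b) * t ^ (2 * d))] (mod int m)"
    by (intro cong_add cong_mult cong_refl) simp_all
  have right: "[int a + (int c + int e * t ^ (2 * d)) mod int m * t ^ (2 * b)
      = int a + (int c + int e * t ^ (2 * d)) * t ^ (2 * b)] (mod int m)"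
    by (intro cong_add cong_mult cong_refl) simp
  have eq: "int a + int c * t ^ (2 * b) + int e * (t ^ (2 * b) * t ^ (2 * d))
      = int a + (int c + int e * t ^ (2 * d)) * t ^ (2 * b)"
    by (simp add: algebra_simps)
  have "[(int a + int c * t ^ (2 * b)) mod int m + int e * t ^ (2 * ((b + d) mod 3))
      = int a + (int c + int e * t ^ (2 * d)) mod int m * t ^ (2 * b)] (mod int m)"
    using cong_trans[OF left[unfolded eq] cong_sym[OF right]] .
  then show "x \<otimes>\<^bsub>T_group m t\<^esub> y \<otimes>\<^bsub>T_group m t\<^esub> z = x \<otimes>\<^bsub>T_group m t\<^esub> (y \<otimes>\<^bsub>T_group m t\<^esub> z)"
    using m by (simp add: xyz T_group_mult T_mult_def cong_def) (simp add: mod_simps add.assoc)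
next
  fix x assume x: "x \<in> carrier (T_group m t)"
  then obtain a b where ab: "x = (a, b)" "b < 3"
    by (auto simp: carrier_T_group)
  define d where "d = (3 - b) mod 3"
  have "b = 0 \<or> b = 1 \<or> b = 2"
    using ab(2) by auto
  then have "(d + b) mod 3 = 0"
    by (auto simp: d_def)
  then have "(nat ((- int a * t ^ (2 * d)) mod int m), d) \<otimes>\<^bsub>T_group m t\<^esub> x = \<one>\<^bsub>T_group m t\<^esub>"
    using m by (simp add: ab T_group_mult T_mult_def one_T_group mod_simps)
  moreover have "(nat ((- int a * t ^ (2 * d)) mod int m), d) \<in> carrier (T_group m t)"
    using m by (auto simp: carrier_T_group d_def nat_less_iff)
  ultimately show "\<exists>y\<in>carrier (T_group m t). y \<otimes>\<^bsub>T_group m t\<^esub> x = \<one>\<^bsub>T_group m t\<^esub>"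
    by blast
qed (use m in \<open>auto simp: carrier_T_group T_group_mult T_mult_def one_T_group nat_less_iff\<close>)

lemma T_group_pow_snd_zero:
  "(a, 0) [^]\<^bsub>T_group m t\<^esub> (n::nat) = ((n * a) mod m, 0)"
proof (induction n)
  case 0
  show ?case
    by (simp add: one_T_group)
next
  case (Suc n)
  have "nat ((int ((n * a) mod m) + int a) mod int m) = (Suc n * a) mod m"
    by (simp flip: of_nat_add of_nat_mod add: mod_simps add.commute)
  then show ?case
    using Suc.IH by (simp add: T_group_mult T_mult_def)
qed

lemma cube_root_of_unity_dvd_sum_even_powers:
  fixes t m :: int
  assumes t: "[t ^ 3 = 1] (mod m)" and coprime: "coprime m (t - 1)"
  shows "m dvd 1 + t ^ 2 + t ^ 4"
proof -
  have "m dvd (t - 1) * (1 + t + t ^ 2)"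
    using t by (simp add: cong_iff_dvd_diff dvd_diff_commute algebra_simps eval_nat_numeral)
  then have "m dvd 1 + t + t ^ 2"
    using coprime by (simp add: coprime_dvd_mult_right_iff)
  moreover have "m dvd t * (t ^ 3 - 1)"
    using t by (simp add: cong_iff_dvd_diff dvd_diff_commute)
  ultimately have "m dvd (1 + t + t ^ 2) + t * (t ^ 3 - 1)"
    by (rule dvd_add)
  then show ?thesis
    by (simp add: algebra_simps eval_nat_numeral)
qed

lemma T_group_cube_eq_one:
  assumes t: "[t ^ 3 = 1] (mod int m)" and coprime: "coprime (int m) (t - 1)"
    and x: "x \<in> carrier (T_group m t)" and "snd x \<noteq> 0"
  shows "x [^]\<^bsub>T_group m t\<^esub> (3::nat) = \<one>\<^bsub>T_group m t\<^esub>"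
proof -
  obtain a b where ab: "x = (a, b)" "a < m" "b < 3"
    using x by (auto simp: carrier_T_group)
  then have "m > 0"
    by simp
  then interpret group "T_group m t"
    using group_T_group t by blast
  have "int m dvd int a * (1 + t ^ 2 + t ^ 4)"
    using cube_root_of_unity_dvd_sum_even_powers[OF t coprime] by simp
  then have "(int a + int a * t ^ 2 + int a * t ^ 4) mod int m = 0"
    and "(int a + int a * t ^ 4 + int a * t ^ 2) mod int m = 0"
    by (simp_all add: algebra_simps)
  moreover have "b = 1 \<or> b = 2"
    using ab \<open>snd x \<noteq> 0\<close> by auto
  ultimately have "x \<otimes>\<^bsub>T_group m t\<^esub> x \<otimes>\<^bsub>T_group m t\<^esub> x = \<one>\<^bsub>T_group m t\<^esub>"
    using \<open>m > 0\<close> by (auto simp: ab T_group_mult T_mult_def one_T_group mod_add_left_eq)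
  then show ?thesis
    using x by (simp add: numeral_3_eq_3)
qed

lemma T_group_ord_power_of_3_iff:
  assumes m: "m = 3 * k + 1" and t: "[t ^ 3 = 1] (mod int m)" and coprime: "coprime (int m) (t - 1)"
    and x: "x \<in> carrier (T_group m t)"
  shows "(\<exists>n::nat. group.ord (T_group m t) x = 3 ^ n) \<longleftrightarrow> snd x \<noteq> 0 \<or> x = (0, 0)"
proof -
  interpret group "T_group m t"
    using group_T_group[of m t] m t by simp
  show ?thesis
  proof (cases "snd x = 0")
    case False
    have "ord x dvd 3 ^ 1"
      using T_group_cube_eq_one[OF t coprime x False] pow_eq_id[OF x] by simp
    then have "\<exists>n::nat. ord x = 3 ^ n"
      using divides_primepow_nat[of 3 "ord x" 1] by auto
    then show ?thesis
      using False by simp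
  next
    case True
    then obtain a where a: "x = (a, 0)" "a < m"
      using x by (auto simp: carrier_T_group)
    have "ord x dvd m"
      using T_group_pow_snd_zero[where a = a and n = m and m = m and t = t] pow_eq_id[OF x]
      by (simp add: a one_T_group)
    have "x = (0, 0)" if "ord x = 3 ^ n" for n
    proof (cases n)
      case 0
      then show ?thesis
        using that ord_eq_1[OF x] by (simp add: one_T_group)
    next
      case (Suc n')
      then have "3 dvd m"
        using \<open>ord x dvd m\<close> that by (metis dvd_trans dvd_triv_left power_Suc)
      then show ?thesis
        using m by presburger
    qed
    moreover have "\<exists>n::nat. ord (0, 0) = 3 ^ n"
      using ord_id by (intro exI[of _ 0]) (simp add: one_T_group)
    ultimately show ?thesis
      using True by auto
  qed
qed

lemma T_group_snd_mult: "snd (x \<otimes>\<^bsub>T_group m t\<^esub> y) = (snd x + snd y) mod 3"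
  by (simp add: T_group_mult T_mult_def)

lemma T_group_snd_inv_mult:
  assumes T: "group (T_group m t)"
    and h: "h \<in> carrier (T_group m t)" and g: "g \<in> carrier (T_group m t)"
  shows "snd (inv\<^bsub>T_group m t\<^esub> h \<otimes>\<^bsub>T_group m t\<^esub> g) = (snd g + 3 - snd h) mod 3"
proof -
  interpret group "T_group m t"
    by (rule T)
  define k where "k = inv\<^bsub>T_group m t\<^esub> h \<otimes>\<^bsub>T_group m t\<^esub> g"
  have "h \<otimes>\<^bsub>T_group m t\<^esub> k = g"
    using h g by (simp add: k_def m_assoc[symmetric])
  then have "snd g = (snd h + snd k) mod 3"
    by (metis T_group_snd_mult)
  moreover have "k \<in> carrier (T_group m t)"
    using h g by (simp add: k_def)
  then have "snd h = 0 \<or> snd h = 1 \<or> snd h = 2" and "snd k = 0 \<or> snd k = 1 \<or> snd k = 2"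
    using h by (auto simp: carrier_T_group)
  ultimately show ?thesis
    unfolding k_def[symmetric] by (elim disjE) simp_all
qed

lemma sum_T_group_snd:
  fixes f :: "nat \<Rightarrow> 'a::comm_semiring_1"
  shows "(\<Sum>h\<in>carrier (T_group m t). f (snd h)) = of_nat m * (\<Sum>d<3. f d)"
proof -
  have "(\<Sum>h\<in>carrier (T_group m t). f (snd h)) = (\<Sum>(a, d)\<in>{0..<m} \<times> {0..<3}. f d)"
    by (simp add: carrier_T_group split_beta)
  also have "\<dots> = (\<Sum>a\<in>{0..<m}. \<Sum>d\<in>{0..<3}. f d)"
    by (rule sum.cartesian_product[symmetric])
  finally show ?thesis
    by (simp add: atLeast0LessThan)
qed

section \<open>Elements of the group algebra constant on the cosets of <x>\<close>

lemma sum_lessThan_3: "(\<Sum>d<3. f d) = f 0 + f 1 + f (2::nat)"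
  by (simp add: eval_nat_numeral lessThan_Suc add.commute add.left_commute)

definition cyclic3_conv :: "(nat \<Rightarrow> 'a) \<Rightarrow> (nat \<Rightarrow> 'a) \<Rightarrow> nat \<Rightarrow> 'a::comm_semiring_1" where
  "cyclic3_conv l u b = (\<Sum>d<3. l d * u ((b + 3 - d) mod 3))"

lemma cyclic3_conv_cube:
  fixes l :: "nat \<Rightarrow> 'a::comm_ring_1"
  assumes three: "(3::'a) = 0" and b: "b < 3"
  shows "cyclic3_conv (cyclic3_conv l l) l b = (if b = 0 then (l 0 + l 1 + l 2) ^ 3 else 0)"
proof -
  have conv: "cyclic3_conv u v 0 = u 0 * v 0 + u 1 * v 2 + u 2 * v 1"
    "cyclic3_conv u v 1 = u 0 * v 1 + u 1 * v 0 + u 2 * v 2"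
    "cyclic3_conv u v 2 = u 0 * v 2 + u 1 * v 1 + u 2 * v 0" for u v :: "nat \<Rightarrow> 'a"
    by (simp_all add: cyclic3_conv_def sum_lessThan_3)
  consider "b = 0" | "b = 1" | "b = 2"
    using b by linarith
  then show ?thesis
  proof cases
    case 1
    have "cyclic3_conv (cyclic3_conv l l) l 0 = (l 0 + l 1 + l 2) ^ 3
        - 3 * (l 0 * l 0 * (l 1 + l 2) + l 1 * l 1 * (l 0 + l 2) + l 2 * l 2 * (l 0 + l 1))"
      unfolding conv by (simp add: algebra_simps power3_eq_cube)
    then show ?thesis
      using 1 three by simp
  next
    case 2
    have "cyclic3_conv (cyclic3_conv l l) l 1 = 3 * (l 0 * l 0 * l 1 + l 1 * l 1 * l 2 + l 0 * l 2 * l 2)"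
      unfolding conv by (simp add: algebra_simps power3_eq_cube)
    then show ?thesis
      using 2 three by simp
  next
    case 3
    have "cyclic3_conv (cyclic3_conv l l) l 2 = 3 * (l 0 * l 0 * l 2 + l 1 * l 2 * l 2 + l 0 * l 1 * l 1)"
      unfolding conv by (simp add: algebra_simps power3_eq_cube)
    then show ?thesis
      using 3 three by simp
  qed
qed

lemma group_algebra_mult_T_coset_functions:
  fixes \<beta> \<gamma> :: "nat \<times> nat \<Rightarrow> 'f::field"
  assumes T: "group (T_group m t)"
    and \<beta>: "\<And>h. h \<in> carrier (T_group m t) \<Longrightarrow> \<beta> h = l (snd h)"
    and \<gamma>: "\<And>h. h \<in> carrier (T_group m t) \<Longrightarrow> \<gamma> h = u (snd h)"
    and g: "g \<in> carrier (T_group m t)"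
  shows "(\<beta> \<otimes>\<^bsub>group_algebra (T_group m t)\<^esub> \<gamma>) g = of_nat m * cyclic3_conv l u (snd g)"
proof -
  interpret group "T_group m t"
    by (rule T)
  have "(\<beta> \<otimes>\<^bsub>group_algebra (T_group m t)\<^esub> \<gamma>) g = (\<Sum>h\<in>carrier (T_group m t). \<beta> h * \<gamma> (inv\<^bsub>T_group m t\<^esub> h \<otimes>\<^bsub>T_group m t\<^esub> g))"
    by (rule group_algebra_mult_apply[OF g])
  also have "\<dots> = (\<Sum>h\<in>carrier (T_group m t). l (snd h) * u ((snd g + 3 - snd h) mod 3))"
    using g by (intro sum.cong refl) (simp add: \<beta> \<gamma> T_group_snd_inv_mult[OF T])
  also have "\<dots> = of_nat m * cyclic3_conv l u (snd g)"
    using sum_T_group_snd[where f = "\<lambda>d. l d * u ((snd g + 3 - d) mod 3)" and m = m and t = t]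
    by (simp add: cyclic3_conv_def)
  finally show ?thesis .
qed

(* The element s of the theorem: by T_group_ord_power_of_3_iff, the elements of 3-power order
   are the identity and everything outside <x> = {(a, 0)}. *)
definition T_three_elements_sum :: "nat \<Rightarrow> int \<Rightarrow> nat \<times> nat \<Rightarrow> 'a::field" where
  "T_three_elements_sum m t =
     (\<lambda>g. if g \<in> carrier (T_group m t) \<and> (snd g \<noteq> 0 \<or> g = (0, 0)) then 1 else 0)"

lemma group_algebra_mult_T_three_elements_sum:
  fixes \<beta> :: "nat \<times> nat \<Rightarrow> 'f::field"
  assumes T: "group (T_group m t)" and g: "g \<in> carrier (T_group m t)"
  shows "(\<beta> \<otimes>\<^bsub>group_algebra (T_group m t)\<^esub> T_three_elements_sum m t) g
    = \<beta> g + (\<Sum>h\<in>{h \<in> carrier (T_group m t). snd h \<noteq> snd g}. \<beta> h)"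
proof -
  interpret group "T_group m t"
    by (rule T)
  have fin: "finite (carrier (T_group m t))"
    by (simp add: carrier_T_group)
  have "\<beta> h * T_three_elements_sum m t (inv\<^bsub>T_group m t\<^esub> h \<otimes>\<^bsub>T_group m t\<^esub> g)
      = (if snd h \<noteq> snd g then \<beta> h else 0) + (if h = g then \<beta> h else 0)"
    if h: "h \<in> carrier (T_group m t)" for h
  proof -
    have "snd h = 0 \<or> snd h = 1 \<or> snd h = 2" "snd g = 0 \<or> snd g = 1 \<or> snd g = 2"
      using h g by (auto simp: carrier_T_group)
    then have "(snd g + 3 - snd h) mod 3 \<noteq> 0 \<longleftrightarrow> snd h \<noteq> snd g"
      by (elim disjE) simp_all
    moreover have "inv\<^bsub>T_group m t\<^esub> h \<otimes>\<^bsub>T_group m t\<^esub> g = \<one>\<^bsub>T_group m t\<^esub> \<longleftrightarrow> h = g"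
      using h g by (auto simp: inv_solve_left')
    ultimately show ?thesis
      using h g by (auto simp: T_three_elements_sum_def T_group_snd_inv_mult[OF T] one_T_group)
  qed
  then have "(\<beta> \<otimes>\<^bsub>group_algebra (T_group m t)\<^esub> T_three_elements_sum m t) g
      = (\<Sum>h\<in>carrier (T_group m t). (if snd h \<noteq> snd g then \<beta> h else 0) + (if h = g then \<beta> h else 0))"
    using g by (simp add: group_algebra_mult_apply)
  also have "\<dots> = \<beta> g + (\<Sum>h\<in>{h \<in> carrier (T_group m t). snd h \<noteq> snd g}. \<beta> h)"
    using fin g by (simp add: sum.distrib sum.inter_filter)
  finally show ?thesis .
qed

lemma left_annihilator_T_three_elements_sumE:
  fixes \<beta> :: "nat \<times> nat \<Rightarrow> 'f::field"
  assumes T: "group (T_group m t)" and m: "of_nat m = (1::'f)"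
    and ann: "\<beta> \<otimes>\<^bsub>group_algebra (T_group m t)\<^esub> T_three_elements_sum m t = (\<lambda>g. 0)"
  obtains l where "\<And>h. h \<in> carrier (T_group m t) \<Longrightarrow> \<beta> h = l (snd h)" and "l 0 + l 1 + l 2 = 0"
proof -
  define l where "l b = - (\<Sum>h\<in>{h \<in> carrier (T_group m t). snd h \<noteq> b}. \<beta> h)" for b
  have \<beta>_eq: "\<beta> h = l (snd h)" if "h \<in> carrier (T_group m t)" for h
    using group_algebra_mult_T_three_elements_sum[OF T that, of \<beta>] ann
    by (simp add: l_def eq_neg_iff_add_eq_0)
  have "(\<Sum>h\<in>{h \<in> carrier (T_group m t). snd h \<noteq> 0}. \<beta> h)
      = (\<Sum>h\<in>carrier (T_group m t). (\<lambda>d. if d \<noteq> 0 then l d else 0) (snd h))"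
    by (simp add: sum.inter_filter carrier_T_group \<beta>_eq cong: if_cong)
  also have "\<dots> = l 1 + l 2"
    using m sum_T_group_snd[where f = "\<lambda>d. if d \<noteq> 0 then l d else 0" and m = m and t = t]
    by (simp add: sum_lessThan_3)
  finally have "l 0 + l 1 + l 2 = 0"
    by (simp add: l_def)
  with \<beta>_eq show ?thesis
    using that by blast
qed

lemma T_coset_function_cube_eq_zero:
  fixes \<beta> :: "nat \<times> nat \<Rightarrow> 'f::field"
  assumes T: "group (T_group m t)" and m: "of_nat m = (1::'f)" and three: "(3::'f) = 0"
    and \<beta>: "\<And>h. h \<in> carrier (T_group m t) \<Longrightarrow> \<beta> h = l (snd h)" and l: "l 0 + l 1 + l 2 = 0"
  shows "\<beta> \<otimes>\<^bsub>group_algebra (T_group m t)\<^esub> \<beta> \<otimes>\<^bsub>group_algebra (T_group m t)\<^esub> \<beta> = (\<lambda>g. 0)"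
proof
  fix g
  have \<beta>\<beta>: "(\<beta> \<otimes>\<^bsub>group_algebra (T_group m t)\<^esub> \<beta>) h = cyclic3_conv l l (snd h)"
    if "h \<in> carrier (T_group m t)" for h
    using group_algebra_mult_T_coset_functions[where \<beta> = \<beta> and \<gamma> = \<beta> and l = l and u = l, OF T \<beta> \<beta> that] m
    by simp
  show "(\<beta> \<otimes>\<^bsub>group_algebra (T_group m t)\<^esub> \<beta> \<otimes>\<^bsub>group_algebra (T_group m t)\<^esub> \<beta>) g = 0"
  proof (cases "g \<in> carrier (T_group m t)")
    case True
    then have "snd g < 3"
      by (auto simp: carrier_T_group)
    then show ?thesis
      using group_algebra_mult_T_coset_functions[where \<beta> = "\<beta> \<otimes>\<^bsub>group_algebra (T_group m t)\<^esub> \<beta>"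
          and \<gamma> = \<beta> and l = "cyclic3_conv l l" and u = l, OF T \<beta>\<beta> \<beta> True]
        m cyclic3_conv_cube[OF three] l
      by simp
  qed (simp add: group_algebra_mult_outside)
qed

lemma T_three_elements_sum_eq:
  assumes "m = 3 * k + 1" and "[t ^ 3 = 1] (mod int m)" and "coprime (int m) (t - 1)"
  shows "T_three_elements_sum m t
    = (\<lambda>g. if g \<in> carrier (T_group m t) \<and> (\<exists>n::nat. group.ord (T_group m t) g = 3 ^ n)
           then 1 else 0)"
proof
  fix g
  show "T_three_elements_sum m t g
    = (if g \<in> carrier (T_group m t) \<and> (\<exists>n::nat. group.ord (T_group m t) g = 3 ^ n) then 1 else 0)"
    using T_group_ord_power_of_3_iff[OF assms, of g]
    by (cases "g \<in> carrier (T_group m t)") (simp_all add: T_three_elements_sum_def)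
qed

lemma left_annihilator_T_three_elements_sum_cube_eq_zero:
  fixes \<beta> :: "nat \<times> nat \<Rightarrow> 'f::field"
  assumes T: "group (T_group m t)" and m: "of_nat m = (1::'f)" and three: "(3::'f) = 0"
    and ann: "\<beta> \<otimes>\<^bsub>group_algebra (T_group m t)\<^esub> T_three_elements_sum m t = (\<lambda>g. 0)"
  shows "\<beta> \<otimes>\<^bsub>group_algebra (T_group m t)\<^esub> \<beta> \<otimes>\<^bsub>group_algebra (T_group m t)\<^esub> \<beta> = (\<lambda>g. 0)"
proof (rule left_annihilator_T_three_elements_sumE[OF T m ann])
  fix l assume "\<And>h. h \<in> carrier (T_group m t) \<Longrightarrow> \<beta> h = l (snd h)" and "l 0 + l 1 + l 2 = 0"
  then show ?thesis
    by (rule T_coset_function_cube_eq_zero[OF T m three])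
qed

theorem proposition3p4:
  fixes k :: nat and m :: nat and t :: int
    and F :: "'f::field itself"
  assumes "finite (UNIV :: 'f set)"
    and "CHAR('f) = 3"
    and "m = 3 * k + 1"
    and "[t ^ 3 = 1] (mod int m)"
    and "gcd (int m) (t - 1) = 1"
  defines "FG \<equiv> (group_algebra (T_group m t) :: ((nat \<times> nat) \<Rightarrow> 'f) ring)"
    and "s \<equiv> (\<lambda>g. if g \<in> carrier (T_group m t) \<and> (\<exists>n::nat. group.ord (T_group m t) g = 3 ^ n) then (1::'f) else 0)"
  shows "{\<alpha> \<in> carrier FG. \<alpha> \<otimes>\<^bsub>FG\<^esub> s = \<zero>\<^bsub>FG\<^esub> \<and> s \<otimes>\<^bsub>FG\<^esub> \<alpha> = \<zero>\<^bsub>FG\<^esub>}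
           \<subseteq> jacobson_radical FG"
proof -
  have three: "(3::'f) = 0"
    using of_nat_CHAR[where 'a = 'f] assms(2) by simp
  have m_one: "of_nat m = (1::'f)"
    using three assms(3) by simp
  have T: "group (T_group m t)"
    using group_T_group assms(3,4) by simp
  have "ring FG"
    unfolding FG_def by (rule group.ring_group_algebra[OF T]) (simp add: carrier_T_group)
  then interpret FG: ring FG .
  have "coprime (int m) (t - 1)"
    using assms(5) by (simp add: coprime_iff_gcd_eq_1)
  then have s_eq: "s = T_three_elements_sum m t"
    unfolding s_def by (rule T_three_elements_sum_eq[OF assms(3,4), symmetric])
  have "s \<in> carrier FG"
    by (simp add: FG_def group_algebra_carrier_iff s_def)
  then have "{\<beta> \<in> carrier FG. \<beta> \<otimes>\<^bsub>FG\<^esub> s = \<zero>\<^bsub>FG\<^esub>} \<subseteq> jacobson_radical FG"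
  proof (intro FG.nil_left_ideal_subset_jacobson_radical FG.left_ideal_left_annihilator)
    fix \<beta> assume \<beta>: "\<beta> \<in> {\<beta> \<in> carrier FG. \<beta> \<otimes>\<^bsub>FG\<^esub> s = \<zero>\<^bsub>FG\<^esub>}"
    then have "\<beta> \<otimes>\<^bsub>FG\<^esub> \<beta> \<otimes>\<^bsub>FG\<^esub> \<beta> = \<zero>\<^bsub>FG\<^esub>"
      using left_annihilator_T_three_elements_sum_cube_eq_zero[OF T m_one three]
      by (simp add: FG_def s_eq group_algebra_zero)
    then show "\<exists>n::nat. \<beta> [^]\<^bsub>FG\<^esub> n = \<zero>\<^bsub>FG\<^esub>"
      using \<beta> by (intro exI[of _ 3]) (simp add: numeral_3_eq_3)
  qed
  then show ?thesis
    by blast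
qed

end
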